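(* In a diagonal positive unital circuit, every operator $O_k(\mathbf{x}_k)$ (for every unit $k$ and every assignment $\mathbf{x}_k$) is a diagonal matrix.
   Context: A partition circuit over discrete variables $\mathbf{x}=\{x_0,\dots,x_{N-1}\}$ is a rooted binary tree whose leaves are in bijection with the variables (leaf $k$ carries $x_k$ with finite value set $\Omega(X_k)$), each internal unit $k$ having two children $k_l,k_r$; $\mathbf{x}_k$ denotes an assignment to the variables at leaves below $k$. A diagonal positive unital circuit assigns: to each leaf $k$ diagonal complex matrices $\Delta_{x_k}$, $x_k\in\Omega(X_k)$, with $\sum_{x_k}\Delta_{x_k}\Delta_{x_k}^*=\mathbb{1}$, and sets $O_k(\mathbf{x}_k)=\Delta_{x_k}\Delta_{x_k}^*$; to each internal unit $k$ (with input dimension $n$, the size of $O_{k_l}\otimes O_{k_r}$, and output dimension $m$) diagonal $n\times n$ matrices $D_{kj}$, $j=1,\dots,m$, with $\operatorname{Tr}[D_{kj}D_{kj}^*]=1$, and sets $O_k(\mathbf{x}_k)=\sum_{j=1}^m J_jD_{kj}\big(O_{k_l}(\mathbf{x}_{k_l})\otimes O_{k_r}(\mathbf{x}_{k_r})\big)D_{kj}^*J_j^*$, where $J_j$ is the $m\times n$ matrix whose $j$-th row consists of ones and all other entries are zero, and $\otimes$ is the Kronecker product. *)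

theory Defs
  imports "Jordan_Normal_Form.Matrix" "HOL.Complex"
begin

definition ctrans :: "complex mat \<Rightarrow> complex mat" where
  "ctrans A = mat (dim_col A) (dim_row A) (\<lambda>(i,j). cnj (A $$ (j,i)))"

definition kron :: "complex mat \<Rightarrow> complex mat \<Rightarrow> complex mat" where
  "kron A B = mat (dim_row A * dim_row B) (dim_col A * dim_col B)
     (\<lambda>(i,j). A $$ (i div dim_row B, j div dim_col B) * B $$ (i mod dim_row B, j mod dim_col B))"

definition mtrace :: "complex mat \<Rightarrow> complex" where
  "mtrace A = (\<Sum>i<dim_row A. A $$ (i,i))"

(* J_j (0-based j): m x n matrix whose j-th row is all ones, other entries zero *)
definition Jrow :: "nat \<Rightarrow> nat \<Rightarrow> nat \<Rightarrow> complex mat" where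
  "Jrow m n j = mat m n (\<lambda>(i,_). if i = j then 1 else 0)"

definition msum :: "nat \<Rightarrow> complex mat list \<Rightarrow> complex mat" where
  "msum n As = foldr (+) As (0\<^sub>m n n)"

(* Leaf v Ds : leaf carrying variable x_v; value set Omega(X_v) = {0..<length Ds},
               Ds ! a is the matrix Delta_a.
   Node Ds l r : internal unit with children l, r; output dimension m = length Ds,
               Ds ! j is the matrix D_{k,j+1}. *)
datatype pcircuit = Leaf nat "complex mat list" | Node "complex mat list" pcircuit pcircuit

fun leaves :: "pcircuit \<Rightarrow> (nat \<times> complex mat list) list" where
  "leaves (Leaf v Ds) = [(v, Ds)]"
| "leaves (Node Ds l r) = leaves l @ leaves r"

fun units :: "pcircuit \<Rightarrow> pcircuit set" where
  "units (Leaf v Ds) = {Leaf v Ds}"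
| "units (Node Ds l r) = insert (Node Ds l r) (units l \<union> units r)"

fun cdim :: "pcircuit \<Rightarrow> nat" where
  "cdim (Leaf v Ds) = dim_row (hd Ds)"
| "cdim (Node Ds l r) = length Ds"

definition partition_circuit :: "nat \<Rightarrow> pcircuit \<Rightarrow> bool" where
  "partition_circuit N c \<longleftrightarrow> distinct (map fst (leaves c)) \<and> set (map fst (leaves c)) = {0..<N}"

fun diag_pos_unital :: "pcircuit \<Rightarrow> bool" where
  "diag_pos_unital (Leaf v Ds) \<longleftrightarrow>
     Ds \<noteq> [] \<and>
     (\<forall>D\<in>set Ds. D \<in> carrier_mat (dim_row (hd Ds)) (dim_row (hd Ds)) \<and> diagonal_mat D) \<and>
     msum (dim_row (hd Ds)) (map (\<lambda>D. D * ctrans D) Ds) = 1\<^sub>m (dim_row (hd Ds))"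
| "diag_pos_unital (Node Ds l r) \<longleftrightarrow>
     diag_pos_unital l \<and> diag_pos_unital r \<and>
     (\<forall>D\<in>set Ds. D \<in> carrier_mat (cdim l * cdim r) (cdim l * cdim r) \<and> diagonal_mat D
                 \<and> mtrace (D * ctrans D) = 1)"

definition admissible :: "pcircuit \<Rightarrow> (nat \<Rightarrow> nat) \<Rightarrow> bool" where
  "admissible k x \<longleftrightarrow> (\<forall>(v, Ds) \<in> set (leaves k). x v < length Ds)"

fun Op :: "pcircuit \<Rightarrow> (nat \<Rightarrow> nat) \<Rightarrow> complex mat" where
  "Op (Leaf v Ds) x = (Ds ! x v) * ctrans (Ds ! x v)"
| "Op (Node Ds l r) x =
     (let m = length Ds; n = cdim l * cdim r in
      msum m (map (\<lambda>j. Jrow m n j * (Ds ! j) * kron (Op l x) (Op r x) * ctrans (Ds ! j)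
                         * ctrans (Jrow m n j)) [0..<m]))"

end

theory Submission
  imports Defs
begin

text \<open>A leaf operator is \<open>\<Delta> \<Delta>\<^sup>*\<close> with \<open>\<Delta>\<close> diagonal, hence diagonal. At an internal unit every
  summand has the form \<open>J\<^sub>j Y J\<^sub>j\<^sup>*\<close>; since \<open>J\<^sub>j\<close> vanishes outside row \<open>j\<close>, this matrix vanishes
  outside the entry \<open>(j, j)\<close>, whatever \<open>Y\<close> is, and a sum of diagonal matrices is diagonal.\<close>

lemma dim_ctrans [simp]:
  "dim_row (ctrans A) = dim_col A" "dim_col (ctrans A) = dim_row A"
  by (simp_all add: ctrans_def)

lemma ctrans_carrier: "A \<in> carrier_mat n n \<Longrightarrow> ctrans A \<in> carrier_mat n n"
  by auto

lemma diagonal_mat_ctrans: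
  assumes "diagonal_mat A"
  shows "diagonal_mat (ctrans A)"
  using assms by (auto simp: diagonal_mat_def ctrans_def)

lemma diagonal_mat_mult:
  assumes A: "A \<in> carrier_mat n n" and B: "B \<in> carrier_mat n n"
    and "diagonal_mat A" "diagonal_mat B"
  shows "diagonal_mat (A * B)"
  unfolding diagonal_mat_def
proof (intro allI impI)
  fix i k assume "i < dim_row (A * B)" "k < dim_col (A * B)" "i \<noteq> k"
  then have "i < n" "k < n" "i \<noteq> k" using A B by auto
  then have "(A * B) $$ (i, k) = (\<Sum>l<n. A $$ (i, l) * B $$ (l, k))"
    using A B by (simp add: scalar_prod_def atLeast0LessThan)
  also have "\<dots> = 0"
  proof (intro sum.neutral ballI)
    fix l assume "l \<in> {..<n}"
    then have "A $$ (i, l) = 0 \<or> B $$ (l, k) = 0"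
      using \<open>i < n\<close> \<open>k < n\<close> \<open>i \<noteq> k\<close> A B assms(3,4) unfolding diagonal_mat_def
      by (cases "l = i") auto
    then show "A $$ (i, l) * B $$ (l, k) = 0" by auto
  qed
  finally show "(A * B) $$ (i, k) = 0" .
qed

lemma dim_Jrow [simp]: "dim_row (Jrow m n j) = m" "dim_col (Jrow m n j) = n"
  by (simp_all add: Jrow_def)

lemma diagonal_mat_Jrow_sandwich:
  assumes Y: "Y \<in> carrier_mat n n"
  shows "diagonal_mat (Jrow m n j * Y * ctrans (Jrow m n j))"
  unfolding diagonal_mat_def
proof (intro allI impI)
  let ?J = "Jrow m n j"
  fix a b assume "a < dim_row (?J * Y * ctrans ?J)" "b < dim_col (?J * Y * ctrans ?J)" "a \<noteq> b"
  then have a: "a < m" and b: "b < m" and "a \<noteq> b" by auto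
  have "(?J * Y * ctrans ?J) $$ (a, b) =
      (\<Sum>l<n. (\<Sum>t<n. ?J $$ (a, t) * Y $$ (t, l)) * cnj (?J $$ (b, l)))"
    using a b Y by (simp add: ctrans_def scalar_prod_def atLeast0LessThan)
  also have "\<dots> = 0"
    using a b \<open>a \<noteq> b\<close> by (intro sum.neutral ballI) (auto simp: Jrow_def)
  finally show "(?J * Y * ctrans ?J) $$ (a, b) = 0" .
qed

lemma msum_carrier:
  assumes "\<forall>A\<in>set As. A \<in> carrier_mat n n"
  shows "msum n As \<in> carrier_mat n n"
  using assms by (induction As) (auto simp: msum_def)

lemma diagonal_mat_msum:
  assumes "\<forall>A\<in>set As. A \<in> carrier_mat n n \<and> diagonal_mat A"
  shows "diagonal_mat (msum n As)"
  using assms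
proof (induction As)
  case Nil
  then show ?case by (simp add: msum_def diagonal_mat_def)
next
  case (Cons A As)
  then have "msum n As \<in> carrier_mat n n" "A \<in> carrier_mat n n"
    by (auto intro: msum_carrier)
  with Cons show ?case by (auto simp: msum_def diagonal_mat_def)
qed

lemma admissible_Node:
  "admissible (Node Ds l r) x \<longleftrightarrow> admissible l x \<and> admissible r x"
  by (auto simp: admissible_def)

lemma Op_carrier:
  assumes "diag_pos_unital k" "admissible k x"
  shows "Op k x \<in> carrier_mat (cdim k) (cdim k)"
  using assms
proof (induction k)
  case (Leaf v Ds)
  then have "Ds ! x v \<in> set Ds" by (simp add: admissible_def)
  with Leaf show ?case by (auto simp: ctrans_def)
next
  case (Node Ds l r)
  show ?case by (simp add: Let_def) (rule msum_carrier, auto)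
qed

lemma diagonal_mat_Op:
  assumes "diag_pos_unital k" "admissible k x"
  shows "diagonal_mat (Op k x)"
proof (cases k)
  case (Leaf v Ds)
  with assms have "Ds ! x v \<in> set Ds" by (simp add: admissible_def)
  then have "Ds ! x v \<in> carrier_mat (cdim k) (cdim k)" "diagonal_mat (Ds ! x v)"
    using assms(1) Leaf by auto
  then show ?thesis
    using Leaf diagonal_mat_mult[OF _ ctrans_carrier] diagonal_mat_ctrans by simp
next
  case (Node Ds l r)
  let ?m = "length Ds" and ?n = "cdim l * cdim r"
  have K: "kron (Op l x) (Op r x) \<in> carrier_mat ?n ?n"
    using assms Node Op_carrier[of l x] Op_carrier[of r x]
    by (auto simp: admissible_Node kron_def)
  have summand: "Jrow ?m ?n j * D * kron (Op l x) (Op r x) * ctrans D * ctrans (Jrow ?m ?n j)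
      \<in> carrier_mat ?m ?m \<and>
      diagonal_mat (Jrow ?m ?n j * D * kron (Op l x) (Op r x) * ctrans D * ctrans (Jrow ?m ?n j))"
    if D: "D \<in> carrier_mat ?n ?n" for D j
  proof -
    let ?Y = "D * kron (Op l x) (Op r x) * ctrans D"
    have Y: "?Y \<in> carrier_mat ?n ?n" using D K by auto
    have "Jrow ?m ?n j * D * kron (Op l x) (Op r x) * ctrans D = Jrow ?m ?n j * ?Y"
    proof -
      have J: "Jrow ?m ?n j \<in> carrier_mat ?m ?n" by auto
      have "D * kron (Op l x) (Op r x) \<in> carrier_mat ?n ?n" using D K by auto
      then show ?thesis
        using assoc_mult_mat[OF J D K] assoc_mult_mat[OF J _ ctrans_carrier[OF D]] by simp
    qed
    then show ?thesis
      using Y diagonal_mat_Jrow_sandwich[OF Y] by auto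
  qed
  have "\<forall>j\<in>set [0..<?m]. Ds ! j \<in> carrier_mat ?n ?n"
    using assms(1) Node by auto
  then show ?thesis
    using Node summand by (simp add: Let_def) (rule diagonal_mat_msum, auto)
qed

lemma diag_pos_unital_units:
  "diag_pos_unital c \<Longrightarrow> k \<in> units c \<Longrightarrow> diag_pos_unital k"
  by (induction c) auto

theorem proposition9:
  fixes N :: nat and c :: pcircuit
  assumes "partition_circuit N c"
    and "diag_pos_unital c"
  shows "\<forall>k \<in> units c. \<forall>x. admissible k x \<longrightarrow> diagonal_mat (Op k x)"
  using assms(2) diag_pos_unital_units diagonal_mat_Op by blast

end
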